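(* Let $\lambda,\mu\in P^+$ and let $X\subseteq\mathcal{B}(\lambda)$ and $Y\subseteq\mathcal{B}(\mu)$ be extremal subsets. Then $X\otimes Y=\{x\otimes y: x\in X, y\in Y\}$ is an extremal subset of $\mathcal{B}(\lambda)\otimes\mathcal{B}(\mu)$ if and only if the following holds: for every $i\in I$ and every $x\otimes y\in X\otimes Y$ such that $e_i(x\otimes y)=e_i(x)\otimes y\neq 0$ and $f_i(x\otimes y)=x\otimes f_i(y)\neq 0$, we have $f_i(y)\in Y$.
   Context: Let $\mathfrak g$ be a complex semisimple Lie algebra with Dynkin index set $I$, weight lattice $P$, simple coroots $\alpha_i^\vee$, and dominant weights $P^+=\{\lambda\in P:\langle\alpha_i^\vee,\lambda\rangle\ge 0\ \forall i\in I\}$. For $\lambda\in P^+$, $\mathcal{B}(\lambda)$ denotes Kashiwara's crystal of the irreducible highest weight module of highest weight $\lambda$, with maps $\mathrm{wt}$, and $e_i,f_i:\mathcal{B}(\lambda)\to\mathcal{B}(\lambda)\sqcup\{0\}$, where $\varepsilon_i(b)=\max\{k\ge0: e_i^k(b)\ne0\}$ and $\varphi_i(b)=\max\{k\ge 0: f_i^k(b)\neq 0\}$. The tensor product crystal $\mathcal{B}(\lambda)\otimes\mathcal{B}(\mu)$ has elements $b_1\otimes b_2$ and operators: $e_i(b_1\otimes b_2)=e_i(b_1)\otimes b_2$ if $\varepsilon_i(b_2)\le\varphi_i(b_1)$ and $=b_1\otimes e_i(b_2)$ otherwise; $f_i(b_1\otimes b_2)=f_i(b_1)\otimes b_2$ if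 $\varepsilon_i(b_2)<\varphi_i(b_1)$ and $=b_1\otimes f_i(b_2)$ otherwise (with $0\otimes b=b\otimes 0=0$). An $i$-string of a crystal is a connected component of the graph whose edges are $b\to f_i(b)$ ($f_i(b)\ne 0$). A subset $X$ of a crystal $\mathcal{B}$ (here $\mathcal{B}(\lambda)$ or $\mathcal{B}(\lambda)\otimes\mathcal{B}(\mu)$) is extremal if $X$ is nonempty and for every $i\in I$ and every $i$-string $S$ of $\mathcal{B}$, $S\cap X$ is either $\varnothing$, or $S$, or $\{b\}$ where $b\in S$ satisfies $e_i(b)=0$. *)

theory Defs
  imports Main
begin

text \<open>Abstract (seminormal, Kashiwara-type) crystals: carrier B, Kashiwara operators
  e i, f i given as partial maps (None plays the role of 0).\<close>

fun iter_op :: "('a \<Rightarrow> 'a option) \<Rightarrow> nat \<Rightarrow> 'a \<Rightarrow> 'a option" where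
  "iter_op g 0 b = Some b"
| "iter_op g (Suc k) b = Option.bind (iter_op g k b) g"

definition crystal :: "'a set \<Rightarrow> ('i \<Rightarrow> 'a \<Rightarrow> 'a option) \<Rightarrow> ('i \<Rightarrow> 'a \<Rightarrow> 'a option) \<Rightarrow> bool" where
  "crystal B e f \<longleftrightarrow>
     (\<forall>i b b'. b \<in> B \<longrightarrow> e i b = Some b' \<longrightarrow> b' \<in> B) \<and>
     (\<forall>i b b'. b \<in> B \<longrightarrow> f i b = Some b' \<longrightarrow> b' \<in> B) \<and>
     (\<forall>i b b'. b \<in> B \<longrightarrow> b' \<in> B \<longrightarrow> (f i b = Some b' \<longleftrightarrow> e i b' = Some b)) \<and>
     (\<forall>i b. b \<in> B \<longrightarrow> (\<exists>k. iter_op (e i) k b = None) \<and> (\<exists>k. iter_op (f i) k b = None))"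

definition eps :: "('i \<Rightarrow> 'a \<Rightarrow> 'a option) \<Rightarrow> 'i \<Rightarrow> 'a \<Rightarrow> nat" where
  "eps e i b = (GREATEST k. iter_op (e i) k b \<noteq> None)"

definition phi :: "('i \<Rightarrow> 'a \<Rightarrow> 'a option) \<Rightarrow> 'i \<Rightarrow> 'a \<Rightarrow> nat" where
  "phi f i b = (GREATEST k. iter_op (f i) k b \<noteq> None)"

text \<open>Tensor product rule (Kashiwara convention as in the paper).\<close>
definition tens_e ::
  "('i \<Rightarrow> 'a \<Rightarrow> 'a option) \<Rightarrow> ('i \<Rightarrow> 'a \<Rightarrow> 'a option) \<Rightarrow>
   ('i \<Rightarrow> 'b \<Rightarrow> 'b option) \<Rightarrow> ('i \<Rightarrow> 'b \<Rightarrow> 'b option) \<Rightarrow> 'i \<Rightarrow> 'a \<times> 'b \<Rightarrow> ('a \<times> 'b) option" where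
  "tens_e e1 f1 e2 f2 i p = (case p of (b1, b2) \<Rightarrow>
     if eps e2 i b2 \<le> phi f1 i b1 then map_option (\<lambda>x. (x, b2)) (e1 i b1)
     else map_option (\<lambda>y. (b1, y)) (e2 i b2))"

definition tens_f ::
  "('i \<Rightarrow> 'a \<Rightarrow> 'a option) \<Rightarrow> ('i \<Rightarrow> 'a \<Rightarrow> 'a option) \<Rightarrow>
   ('i \<Rightarrow> 'b \<Rightarrow> 'b option) \<Rightarrow> ('i \<Rightarrow> 'b \<Rightarrow> 'b option) \<Rightarrow> 'i \<Rightarrow> 'a \<times> 'b \<Rightarrow> ('a \<times> 'b) option" where
  "tens_f e1 f1 e2 f2 i p = (case p of (b1, b2) \<Rightarrow>
     if eps e2 i b2 < phi f1 i b1 then map_option (\<lambda>x. (x, b2)) (f1 i b1)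
     else map_option (\<lambda>y. (b1, y)) (f2 i b2))"

definition f_edges :: "'a set \<Rightarrow> ('i \<Rightarrow> 'a \<Rightarrow> 'a option) \<Rightarrow> 'i \<Rightarrow> ('a \<times> 'a) set" where
  "f_edges B f i = {(x, y). x \<in> B \<and> f i x = Some y}"

definition i_string :: "'a set \<Rightarrow> ('i \<Rightarrow> 'a \<Rightarrow> 'a option) \<Rightarrow> 'i \<Rightarrow> 'a \<Rightarrow> 'a set" where
  "i_string B f i b = {c. (b, c) \<in> (f_edges B f i \<union> (f_edges B f i)\<inverse>)\<^sup>*}"

definition i_strings :: "'a set \<Rightarrow> ('i \<Rightarrow> 'a \<Rightarrow> 'a option) \<Rightarrow> 'i \<Rightarrow> 'a set set" where
  "i_strings B f i = i_string B f i ` B"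

definition extremal :: "'a set \<Rightarrow> ('i \<Rightarrow> 'a \<Rightarrow> 'a option) \<Rightarrow> ('i \<Rightarrow> 'a \<Rightarrow> 'a option) \<Rightarrow> 'a set \<Rightarrow> bool" where
  "extremal B e f X \<longleftrightarrow> X \<noteq> {} \<and> X \<subseteq> B \<and>
     (\<forall>i. \<forall>S \<in> i_strings B f i.
        S \<inter> X = {} \<or> S \<inter> X = S \<or> (\<exists>b \<in> S. e i b = None \<and> S \<inter> X = {b}))"

end

theory Submission
  imports Defs
begin

text \<open>
  Extremality is a local condition: in a crystal, a nonempty X is extremal iff it is closed
  under every e_i and closed under f_i at the elements b with e_i b \<noteq> 0. Necessity holds
  because e_i b and f_i b lie in the i-string of b; sufficiency because an i-string is the
  f_i-orbit of its unique element killed by e_i.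

  The tensor product of two crystals is again a crystal: eps_1 + eps_2 and phi_1 + phi_2 drop
  along e_i and f_i, and e_i, f_i stay mutually inverse since f_i b = b' moves phi_1 and eps_2
  so that the branch chosen by e_i at b' leads back to b.
  Closure under the tensor e_i, and under the tensor f_i at non-highest elements, is inherited
  from X and Y, except when e_i acts on the first factor and f_i on the second, i.e. when
  eps_i(y) = phi_i(x); that case is exactly the condition of the theorem.
\<close>

lemma crystal_e_in: "crystal B e f \<Longrightarrow> b \<in> B \<Longrightarrow> e i b = Some c \<Longrightarrow> c \<in> B"
  unfolding crystal_def by meson

lemma crystal_f_in: "crystal B e f \<Longrightarrow> b \<in> B \<Longrightarrow> f i b = Some c \<Longrightarrow> c \<in> B"
  unfolding crystal_def by meson

lemma crystal_f_eq_Some_iff: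
  "crystal B e f \<Longrightarrow> b \<in> B \<Longrightarrow> c \<in> B \<Longrightarrow> f i b = Some c \<longleftrightarrow> e i c = Some b"
  unfolding crystal_def by meson

lemma crystal_e_of_f:
  assumes "crystal B e f" and "b \<in> B" and "f i b = Some c"
  shows "e i c = Some b"
  using crystal_f_eq_Some_iff[OF assms(1,2) crystal_f_in[OF assms]] assms(3) by simp

lemma crystal_f_of_e:
  assumes "crystal B e f" and "b \<in> B" and "e i b = Some c"
  shows "f i c = Some b"
  using crystal_f_eq_Some_iff[OF assms(1) crystal_e_in[OF assms] assms(2)] assms(3) by simp

lemma crystal_e_terminates: "crystal B e f \<Longrightarrow> b \<in> B \<Longrightarrow> \<exists>k. iter_op (e i) k b = None"
  unfolding crystal_def by meson

lemma crystal_f_terminates: "crystal B e f \<Longrightarrow> b \<in> B \<Longrightarrow> \<exists>k. iter_op (f i) k b = None"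
  unfolding crystal_def by meson

lemma iter_op_Suc_left: "iter_op g (Suc k) b = Option.bind (g b) (iter_op g k)"
  by (induction k) (auto split: option.splits)

lemma iter_op_None_mono:
  assumes "iter_op g k b = None" and "k \<le> m"
  shows "iter_op g m b = None"
  using assms(2) by (induction m rule: dec_induct) (simp_all add: assms(1))

lemma iter_op_Suc_eq_Some:
  "iter_op g (Suc k) b = Some c \<longleftrightarrow> (\<exists>a. iter_op g k b = Some a \<and> g a = Some c)"
  by (cases "iter_op g k b") auto

lemma iter_op_None_if_decreasing:
  assumes "\<And>b c. b \<in> B \<Longrightarrow> g b = Some c \<Longrightarrow> c \<in> B \<and> m c < m b"
  shows "b \<in> B \<Longrightarrow> m b < n \<Longrightarrow> iter_op g n b = None"
proof (induction n arbitrary: b)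
  case (Suc n)
  show ?case
  proof (cases "g b")
    case (Some c)
    with Suc.prems assms have "c \<in> B" and "m c < n" by fastforce+
    with Some Suc.IH show ?thesis by (simp add: iter_op_Suc_left del: iter_op.simps(2))
  qed (simp add: iter_op_Suc_left del: iter_op.simps(2))
qed simp

lemma Greatest_iter_op_Suc:
  assumes gb: "g b = Some c" and N: "iter_op g N c = None"
  shows "(GREATEST k. iter_op g k b \<noteq> None) = Suc (GREATEST k. iter_op g k c \<noteq> None)"
proof -
  let ?P = "\<lambda>k. iter_op g k c \<noteq> None"
  have shift: "iter_op g (Suc k) b = iter_op g k c" for k
    using gb by (simp add: iter_op_Suc_left del: iter_op.simps(2))
  have bound: "?P k \<Longrightarrow> k \<le> N" for k
    using iter_op_None_mono[OF N, of k] by (cases "N \<le> k") auto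
  have P0: "?P 0" by simp
  have P: "?P (Greatest ?P)"
    using GreatestI_nat[of ?P, OF P0 bound] .
  have le: "?P k \<Longrightarrow> k \<le> Greatest ?P" for k
    using Greatest_le_nat[of ?P, OF _ bound] .
  show ?thesis
  proof (rule Greatest_equality)
    show "iter_op g (Suc (Greatest ?P)) b \<noteq> None" using P shift by simp
  next
    fix y assume y: "iter_op g y b \<noteq> None"
    show "y \<le> Suc (Greatest ?P)"
    proof (cases y)
      case (Suc k)
      with y have "?P k" by (simp add: shift del: iter_op.simps(2))
      then show ?thesis using Suc le by simp
    qed simp
  qed
qed

lemma phi_Suc:
  assumes "crystal B e f" and "b \<in> B" and "f i b = Some c"
  shows "phi f i b = Suc (phi f i c)"
proof -
  obtain N where "iter_op (f i) N c = None"
    using crystal_f_terminates[OF assms(1) crystal_f_in[OF assms]] ..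
  with assms(3) show ?thesis unfolding phi_def by (rule Greatest_iter_op_Suc)
qed

lemma eps_Suc:
  assumes "crystal B e f" and "b \<in> B" and "e i b = Some c"
  shows "eps e i b = Suc (eps e i c)"
proof -
  obtain N where "iter_op (e i) N c = None"
    using crystal_e_terminates[OF assms(1) crystal_e_in[OF assms]] ..
  with assms(3) show ?thesis unfolding eps_def by (rule Greatest_iter_op_Suc)
qed

lemma crystal_iter_f_in:
  assumes cr: "crystal B e f" and "b \<in> B"
  shows "iter_op (f i) k b = Some c \<Longrightarrow> c \<in> B"
proof (induction k arbitrary: c)
  case (Suc k)
  then show ?case using crystal_f_in[OF cr] by (cases "iter_op (f i) k b") auto
qed (use assms in simp)

lemma crystal_e_of_iter_f_Suc:
  assumes cr: "crystal B e f" and t: "t \<in> B" and "iter_op (f i) (Suc m) t = Some c"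
  shows "\<exists>a. iter_op (f i) m t = Some a \<and> e i c = Some a"
proof -
  obtain a where a: "iter_op (f i) m t = Some a" and "f i a = Some c"
    using assms(3) unfolding iter_op_Suc_eq_Some by blast
  moreover have "a \<in> B" using crystal_iter_f_in[OF cr t a] .
  ultimately show ?thesis using crystal_e_of_f[OF cr] by blast
qed

lemma tens_e_decreases:
  assumes c1: "crystal B1 e1 f1" and c2: "crystal B2 e2 f2"
    and b: "b \<in> B1 \<times> B2" and Eb: "tens_e e1 f1 e2 f2 i b = Some c"
  shows "c \<in> B1 \<times> B2 \<and>
    eps e1 i (fst c) + eps e2 i (snd c) < eps e1 i (fst b) + eps e2 i (snd b)"
proof -
  obtain b1 b2 where b12: "b = (b1, b2)" and b1: "b1 \<in> B1" and b2: "b2 \<in> B2"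
    using b by blast
  show ?thesis
  proof (cases "eps e2 i b2 \<le> phi f1 i b1")
    case True
    then obtain c1 where "e1 i b1 = Some c1" and "c = (c1, b2)"
      using Eb b12 by (auto simp: tens_e_def)
    then show ?thesis using b12 b2 eps_Suc[OF c1 b1] crystal_e_in[OF c1 b1] by simp
  next
    case False
    then obtain c2 where "e2 i b2 = Some c2" and "c = (b1, c2)"
      using Eb b12 by (auto simp: tens_e_def)
    then show ?thesis using b12 b1 eps_Suc[OF c2 b2] crystal_e_in[OF c2 b2] by simp
  qed
qed

lemma tens_f_decreases:
  assumes c1: "crystal B1 e1 f1" and c2: "crystal B2 e2 f2"
    and b: "b \<in> B1 \<times> B2" and Fb: "tens_f e1 f1 e2 f2 i b = Some c"
  shows "c \<in> B1 \<times> B2 \<and>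
    phi f1 i (fst c) + phi f2 i (snd c) < phi f1 i (fst b) + phi f2 i (snd b)"
proof -
  obtain b1 b2 where b12: "b = (b1, b2)" and b1: "b1 \<in> B1" and b2: "b2 \<in> B2"
    using b by blast
  show ?thesis
  proof (cases "eps e2 i b2 < phi f1 i b1")
    case True
    then obtain c1 where "f1 i b1 = Some c1" and "c = (c1, b2)"
      using Fb b12 by (auto simp: tens_f_def)
    then show ?thesis using b12 b2 phi_Suc[OF c1 b1] crystal_f_in[OF c1 b1] by simp
  next
    case False
    then obtain c2 where "f2 i b2 = Some c2" and "c = (b1, c2)"
      using Fb b12 by (auto simp: tens_f_def)
    then show ?thesis using b12 b1 phi_Suc[OF c2 b2] crystal_f_in[OF c2 b2] by simp
  qed
qed

lemma tens_e_of_tens_f: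
  assumes c1: "crystal B1 e1 f1" and c2: "crystal B2 e2 f2"
    and b: "b \<in> B1 \<times> B2" and Fb: "tens_f e1 f1 e2 f2 i b = Some c"
  shows "tens_e e1 f1 e2 f2 i c = Some b"
proof -
  obtain b1 b2 where b12: "b = (b1, b2)" and b1: "b1 \<in> B1" and b2: "b2 \<in> B2"
    using b by blast
  show ?thesis
  proof (cases "eps e2 i b2 < phi f1 i b1")
    case True
    then obtain c1 where f1b: "f1 i b1 = Some c1" and c: "c = (c1, b2)"
      using Fb b12 by (auto simp: tens_f_def)
    have "eps e2 i b2 \<le> phi f1 i c1" using True phi_Suc[OF c1 b1 f1b] by simp
    then show ?thesis using c b12 crystal_e_of_f[OF c1 b1 f1b] by (simp add: tens_e_def)
  next
    case False
    then obtain c2 where f2b: "f2 i b2 = Some c2" and c: "c = (b1, c2)"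
      using Fb b12 by (auto simp: tens_f_def)
    have "eps e2 i c2 = Suc (eps e2 i b2)"
      using eps_Suc[OF c2 crystal_f_in[OF c2 b2 f2b] crystal_e_of_f[OF c2 b2 f2b]] .
    then have "\<not> eps e2 i c2 \<le> phi f1 i b1" using False by simp
    then show ?thesis using c b12 crystal_e_of_f[OF c2 b2 f2b] by (simp add: tens_e_def)
  qed
qed

lemma tens_f_of_tens_e:
  assumes c1: "crystal B1 e1 f1" and c2: "crystal B2 e2 f2"
    and b: "b \<in> B1 \<times> B2" and Eb: "tens_e e1 f1 e2 f2 i b = Some c"
  shows "tens_f e1 f1 e2 f2 i c = Some b"
proof -
  obtain b1 b2 where b12: "b = (b1, b2)" and b1: "b1 \<in> B1" and b2: "b2 \<in> B2"
    using b by blast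
  show ?thesis
  proof (cases "eps e2 i b2 \<le> phi f1 i b1")
    case True
    then obtain c1 where e1b: "e1 i b1 = Some c1" and c: "c = (c1, b2)"
      using Eb b12 by (auto simp: tens_e_def)
    have "eps e2 i b2 < phi f1 i c1"
      using True phi_Suc[OF c1 crystal_e_in[OF c1 b1 e1b] crystal_f_of_e[OF c1 b1 e1b]] by simp
    then show ?thesis using c b12 crystal_f_of_e[OF c1 b1 e1b] by (simp add: tens_f_def)
  next
    case False
    then obtain c2 where e2b: "e2 i b2 = Some c2" and c: "c = (b1, c2)"
      using Eb b12 by (auto simp: tens_e_def)
    have "\<not> eps e2 i c2 < phi f1 i b1" using False eps_Suc[OF c2 b2 e2b] by simp
    then show ?thesis using c b12 crystal_f_of_e[OF c2 b2 e2b] by (simp add: tens_f_def)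
  qed
qed

lemma crystal_tensor:
  assumes c1: "crystal B1 e1 f1" and c2: "crystal B2 e2 f2"
  shows "crystal (B1 \<times> B2) (tens_e e1 f1 e2 f2) (tens_f e1 f1 e2 f2)"
  unfolding crystal_def
proof (intro conjI allI impI)
  fix i b c assume "b \<in> B1 \<times> B2"
  then show "tens_e e1 f1 e2 f2 i b = Some c \<Longrightarrow> c \<in> B1 \<times> B2"
    and "tens_f e1 f1 e2 f2 i b = Some c \<Longrightarrow> c \<in> B1 \<times> B2"
    using tens_e_decreases[OF c1 c2] tens_f_decreases[OF c1 c2] by blast+
next
  fix i b c assume "b \<in> B1 \<times> B2" and "c \<in> B1 \<times> B2"
  then show "tens_f e1 f1 e2 f2 i b = Some c \<longleftrightarrow> tens_e e1 f1 e2 f2 i c = Some b"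
    using tens_e_of_tens_f[OF c1 c2] tens_f_of_tens_e[OF c1 c2] by blast
next
  fix i b assume b: "b \<in> B1 \<times> B2"
  show "\<exists>k. iter_op (tens_e e1 f1 e2 f2 i) k b = None"
    using iter_op_None_if_decreasing[OF tens_e_decreases[OF c1 c2] b lessI] ..
  show "\<exists>k. iter_op (tens_f e1 f1 e2 f2 i) k b = None"
    using iter_op_None_if_decreasing[OF tens_f_decreases[OF c1 c2] b lessI] ..
qed

definition e_closed :: "('i \<Rightarrow> 'a \<Rightarrow> 'a option) \<Rightarrow> 'a set \<Rightarrow> bool" where
  "e_closed e X \<longleftrightarrow> (\<forall>i b c. b \<in> X \<longrightarrow> e i b = Some c \<longrightarrow> c \<in> X)"

definition f_closed_nonhighest ::
  "('i \<Rightarrow> 'a \<Rightarrow> 'a option) \<Rightarrow> ('i \<Rightarrow> 'a \<Rightarrow> 'a option) \<Rightarrow> 'a set \<Rightarrow> bool" where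
  "f_closed_nonhighest e f X \<longleftrightarrow>
     (\<forall>i b c. b \<in> X \<longrightarrow> e i b \<noteq> None \<longrightarrow> f i b = Some c \<longrightarrow> c \<in> X)"

lemma i_string_refl: "b \<in> i_string B f i b"
  by (simp add: i_string_def)

lemma i_string_f: "b \<in> B \<Longrightarrow> f i b = Some c \<Longrightarrow> c \<in> i_string B f i b"
  by (auto simp: i_string_def f_edges_def)

lemma i_string_e:
  "crystal B e f \<Longrightarrow> b \<in> B \<Longrightarrow> e i b = Some c \<Longrightarrow> c \<in> i_string B f i b"
  using crystal_e_in crystal_f_of_e by (fastforce simp: i_string_def f_edges_def)

lemma i_string_eq: "c \<in> i_string B f i b \<Longrightarrow> i_string B f i c = i_string B f i b"
proof -
  let ?R = "f_edges B f i \<union> (f_edges B f i)\<inverse>"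
  have "sym (?R\<^sup>*)" by (simp add: sym_Un_converse sym_rtrancl)
  then show "c \<in> i_string B f i b \<Longrightarrow> ?thesis"
    unfolding i_string_def by (blast dest: symD intro: rtrancl_trans)
qed

lemma i_string_from_highest:
  assumes cr: "crystal B e f" and "t \<in> B" and "e i t = None"
    and "c \<in> i_string B f i t"
  shows "\<exists>k. iter_op (f i) k t = Some c"
proof -
  have "(t, c) \<in> (f_edges B f i \<union> (f_edges B f i)\<inverse>)\<^sup>*"
    using assms(4) by (simp add: i_string_def)
  then show ?thesis
  proof (induction rule: rtrancl_induct)
    case base
    show ?case by (rule exI[of _ 0]) simp
  next
    case (step c d)
    then obtain k where k: "iter_op (f i) k t = Some c" by blast
    from step.hyps(2) show ?case
    proof
      assume "(c, d) \<in> f_edges B f i"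
      then have "iter_op (f i) (Suc k) t = Some d" using k by (simp add: f_edges_def)
      then show ?case ..
    next
      assume "(c, d) \<in> (f_edges B f i)\<inverse>"
      then have "d \<in> B" and "f i d = Some c" by (simp_all add: f_edges_def)
      then have ec: "e i c = Some d" by (rule crystal_e_of_f[OF cr])
      show ?case
      proof (cases k)
        case 0
        then show ?thesis using k ec \<open>e i t = None\<close> by simp
      next
        case (Suc m)
        then show ?thesis
          using crystal_e_of_iter_f_Suc[OF cr \<open>t \<in> B\<close>] k ec by fastforce
      qed
    qed
  qed
qed

lemma i_string_highest_unique:
  assumes cr: "crystal B e f" and "t \<in> B" and "e i t = None"
    and "t' \<in> i_string B f i t" and "e i t' = None"
  shows "t' = t"
proof -
  obtain k where k: "iter_op (f i) k t = Some t'"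
    using i_string_from_highest[OF assms(1-4)] ..
  show ?thesis
  proof (cases k)
    case (Suc m)
    then show ?thesis
      using crystal_e_of_iter_f_Suc[OF cr \<open>t \<in> B\<close>] k \<open>e i t' = None\<close> by fastforce
  qed (use k in simp)
qed

lemma extremalD:
  assumes "extremal B e f X"
  shows "X \<noteq> {}" and "X \<subseteq> B"
    and "S \<in> i_strings B f i \<Longrightarrow>
      S \<inter> X = {} \<or> S \<inter> X = S \<or> (\<exists>t \<in> S. e i t = None \<and> S \<inter> X = {t})"
  using assms unfolding extremal_def by blast+

lemma extremal_i_string_subset:
  assumes ext: "extremal B e f X" and "b \<in> X" and "e i b \<noteq> None"
  shows "i_string B f i b \<subseteq> X"
proof -
  let ?S = "i_string B f i b"
  have "b \<in> B" using extremalD(2)[OF ext] \<open>b \<in> X\<close> ..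
  then have "?S \<in> i_strings B f i" by (simp add: i_strings_def)
  note string_cases = extremalD(3)[OF ext this]
  have b_in: "b \<in> ?S \<inter> X" using i_string_refl \<open>b \<in> X\<close> by fast
  from string_cases show ?thesis
  proof (elim disjE bexE conjE)
    fix t assume "e i t = None" and "?S \<inter> X = {t}"
    with b_in \<open>e i b \<noteq> None\<close> show ?thesis by auto
  qed (use b_in in auto)
qed

lemma extremal_imp_closed:
  assumes cr: "crystal B e f" and ext: "extremal B e f X"
  shows "e_closed e X" and "f_closed_nonhighest e f X"
proof -
  note string_in_X = extremal_i_string_subset[OF ext]
  note XB = extremalD(2)[OF ext]
  show "e_closed e X"
    unfolding e_closed_def
  proof (intro allI impI)
    fix i b c assume "b \<in> X" and ebc: "e i b = Some c"
    have "b \<in> B" using XB \<open>b \<in> X\<close> ..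
    then have "c \<in> i_string B f i b" using ebc by (rule i_string_e[OF cr])
    then show "c \<in> X" using string_in_X[OF \<open>b \<in> X\<close>] ebc by auto
  qed
  show "f_closed_nonhighest e f X"
    unfolding f_closed_nonhighest_def
  proof (intro allI impI)
    fix i b c assume "b \<in> X" and "e i b \<noteq> None" and fbc: "f i b = Some c"
    have "b \<in> B" using XB \<open>b \<in> X\<close> ..
    then have "c \<in> i_string B f i b" using fbc by (rule i_string_f)
    then show "c \<in> X" using string_in_X[OF \<open>b \<in> X\<close> \<open>e i b \<noteq> None\<close>] by blast
  qed
qed

lemma i_string_subset_if_closed:
  assumes cr: "crystal B e f" and XB: "X \<subseteq> B"
    and e_cl: "e_closed e X" and f_cl: "f_closed_nonhighest e f X"
    and "b \<in> X" and "e i b \<noteq> None"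
  shows "i_string B f i b \<subseteq> X"
proof
  fix c assume "c \<in> i_string B f i b"
  then have "(b, c) \<in> (f_edges B f i \<union> (f_edges B f i)\<inverse>)\<^sup>*"
    by (simp add: i_string_def)
  \<comment> \<open>Backward steps are covered by e-closure; a forward step lands on an element that is
    not i-highest, so the next forward step is covered by f-closure.\<close>
  then have "c \<in> X \<and> (\<forall>d. f i c = Some d \<longrightarrow> d \<in> X)"
  proof (induction rule: rtrancl_induct)
    case base
    then show ?case using f_cl \<open>b \<in> X\<close> \<open>e i b \<noteq> None\<close>
      by (auto simp: f_closed_nonhighest_def)
  next
    case (step c d)
    from step.hyps(2) show ?case
    proof
      assume "(c, d) \<in> f_edges B f i"
      then have "c \<in> B" and fc: "f i c = Some d" by (simp_all add: f_edges_def)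
      then have "e i d \<noteq> None" using crystal_e_of_f[OF cr] by simp
      moreover have "d \<in> X" using step.IH fc by simp
      ultimately show ?case using f_cl by (auto simp: f_closed_nonhighest_def)
    next
      assume "(c, d) \<in> (f_edges B f i)\<inverse>"
      then have "d \<in> B" and fd: "f i d = Some c" by (simp_all add: f_edges_def)
      then have "e i c = Some d" by (rule crystal_e_of_f[OF cr])
      then show ?case using step.IH e_cl fd by (auto simp: e_closed_def)
    qed
  qed
  then show "c \<in> X" ..
qed

lemma extremal_iff_closed:
  assumes cr: "crystal B e f"
  shows "extremal B e f X \<longleftrightarrow>
    X \<noteq> {} \<and> X \<subseteq> B \<and> e_closed e X \<and> f_closed_nonhighest e f X"
proof (intro iffI; (elim conjE)?)
  assume ext: "extremal B e f X"
  then show "X \<noteq> {} \<and> X \<subseteq> B \<and> e_closed e X \<and> f_closed_nonhighest e f X"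
    using extremalD(1,2)[OF ext] extremal_imp_closed[OF cr ext] by blast
next
  assume "X \<noteq> {}" and XB: "X \<subseteq> B" and "e_closed e X" and "f_closed_nonhighest e f X"
  note string_in_X = i_string_subset_if_closed[OF cr XB this(3,4)]
  have "S \<inter> X = {} \<or> S \<inter> X = S \<or> (\<exists>t \<in> S. e i t = None \<and> S \<inter> X = {t})"
    if S_string: "S \<in> i_strings B f i" for i S
  proof -
    obtain b0 where S: "S = i_string B f i b0" using S_string unfolding i_strings_def by blast
    consider (nonhighest) b where "b \<in> S \<inter> X" and "e i b \<noteq> None"
      | (empty) "S \<inter> X = {}"
      | (highest) t where "t \<in> S \<inter> X" and "\<forall>t' \<in> S \<inter> X. e i t' = None"
      by blast
    then show ?thesis
    proof cases
      case nonhighest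
      then show ?thesis using string_in_X[of b i] i_string_eq[of b B f i b0] S by auto
    next
      case highest
      then have "S \<inter> X = {t}"
        using i_string_highest_unique[OF cr] i_string_eq[of t B f i b0] S XB by blast
      then show ?thesis using highest by blast
    qed simp
  qed
  then show "extremal B e f X" using \<open>X \<noteq> {}\<close> XB by (simp add: extremal_def)
qed

lemma tens_e_closed:
  assumes X: "e_closed e1 X" and Y: "e_closed e2 Y"
  shows "e_closed (tens_e e1 f1 e2 f2) (X \<times> Y)"
  unfolding e_closed_def
proof (intro allI impI)
  fix i b c assume "b \<in> X \<times> Y" and Eb: "tens_e e1 f1 e2 f2 i b = Some c"
  then obtain x y where b: "b = (x, y)" and x: "x \<in> X" and y: "y \<in> Y" by blast
  show "c \<in> X \<times> Y"
  proof (cases "eps e2 i y \<le> phi f1 i x")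
    case True
    then obtain x' where "e1 i x = Some x'" and "c = (x', y)"
      using Eb b by (auto simp: tens_e_def)
    then show ?thesis using X x y unfolding e_closed_def by blast
  next
    case False
    then obtain y' where "e2 i y = Some y'" and "c = (x, y')"
      using Eb b by (auto simp: tens_e_def)
    then show ?thesis using Y x y unfolding e_closed_def by blast
  qed
qed

lemma tens_f_closed_nonhighest_iff:
  assumes X: "f_closed_nonhighest e1 f1 X" and Y: "f_closed_nonhighest e2 f2 Y"
  shows "f_closed_nonhighest (tens_e e1 f1 e2 f2) (tens_f e1 f1 e2 f2) (X \<times> Y) \<longleftrightarrow>
    (\<forall>i x y x' y'. x \<in> X \<longrightarrow> y \<in> Y \<longrightarrow>
        e1 i x = Some x' \<longrightarrow> tens_e e1 f1 e2 f2 i (x, y) = Some (x', y) \<longrightarrow>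
        f2 i y = Some y' \<longrightarrow> tens_f e1 f1 e2 f2 i (x, y) = Some (x, y') \<longrightarrow>
        y' \<in> Y)"
    (is "?closed \<longleftrightarrow> ?cond")
proof
  assume ?closed
  show ?cond
  proof (intro allI impI)
    fix i x y x' y'
    assume "x \<in> X" "y \<in> Y" "tens_e e1 f1 e2 f2 i (x, y) = Some (x', y)"
      "tens_f e1 f1 e2 f2 i (x, y) = Some (x, y')"
    with \<open>?closed\<close> have "(x, y') \<in> X \<times> Y"
      unfolding f_closed_nonhighest_def by blast
    then show "y' \<in> Y" by simp
  qed
next
  assume ?cond
  show ?closed
    unfolding f_closed_nonhighest_def
  proof (intro allI impI)
    fix i b c
    assume "b \<in> X \<times> Y" and Eb: "tens_e e1 f1 e2 f2 i b \<noteq> None"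
      and Fb: "tens_f e1 f1 e2 f2 i b = Some c"
    then obtain x y where b: "b = (x, y)" and x: "x \<in> X" and y: "y \<in> Y" by blast
    consider (left) "eps e2 i y < phi f1 i x"
      | (switch) "eps e2 i y = phi f1 i x"
      | (right) "phi f1 i x < eps e2 i y"
      by linarith
    then show "c \<in> X \<times> Y"
    proof cases
      case left
      then have "e1 i x \<noteq> None" and "\<exists>x'. f1 i x = Some x' \<and> c = (x', y)"
        using Eb Fb b by (auto simp: tens_e_def tens_f_def)
      then show ?thesis using X x y unfolding f_closed_nonhighest_def by blast
    next
      case switch
      then obtain x' y' where "e1 i x = Some x'" and "f2 i y = Some y'" and c: "c = (x, y')"
        and "tens_e e1 f1 e2 f2 i (x, y) = Some (x', y)"
        and "tens_f e1 f1 e2 f2 i (x, y) = Some (x, y')"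
        using Eb Fb b by (auto simp: tens_e_def tens_f_def)
      then show ?thesis using \<open>?cond\<close> x y by blast
    next
      case right
      then have "e2 i y \<noteq> None" and "\<exists>y'. f2 i y = Some y' \<and> c = (x, y')"
        using Eb Fb b by (auto simp: tens_e_def tens_f_def)
      then show ?thesis using Y x y unfolding f_closed_nonhighest_def by blast
    qed
  qed
qed

theorem theorem1p1:
  fixes B1 :: "'a set" and e1 f1 :: "'i \<Rightarrow> 'a \<Rightarrow> 'a option"
    and B2 :: "'b set" and e2 f2 :: "'i \<Rightarrow> 'b \<Rightarrow> 'b option"
    and X :: "'a set" and Y :: "'b set"
  assumes "crystal B1 e1 f1" and "crystal B2 e2 f2"
    and "extremal B1 e1 f1 X" and "extremal B2 e2 f2 Y"
  shows "extremal (B1 \<times> B2) (tens_e e1 f1 e2 f2) (tens_f e1 f1 e2 f2) (X \<times> Y) \<longleftrightarrow>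
    (\<forall>i x y x' y'. x \<in> X \<longrightarrow> y \<in> Y \<longrightarrow>
        e1 i x = Some x' \<longrightarrow> tens_e e1 f1 e2 f2 i (x, y) = Some (x', y) \<longrightarrow>
        f2 i y = Some y' \<longrightarrow> tens_f e1 f1 e2 f2 i (x, y) = Some (x, y') \<longrightarrow>
        y' \<in> Y)"
proof -
  from assms(3) have X: "X \<noteq> {}" "X \<subseteq> B1" "e_closed e1 X" "f_closed_nonhighest e1 f1 X"
    unfolding extremal_iff_closed[OF assms(1)] by blast+
  from assms(4) have Y: "Y \<noteq> {}" "Y \<subseteq> B2" "e_closed e2 Y" "f_closed_nonhighest e2 f2 Y"
    unfolding extremal_iff_closed[OF assms(2)] by blast+
  have "X \<times> Y \<noteq> {}" and "X \<times> Y \<subseteq> B1 \<times> B2" using X(1,2) Y(1,2) by auto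
  then show ?thesis
    unfolding extremal_iff_closed[OF crystal_tensor[OF assms(1,2)]]
      tens_f_closed_nonhighest_iff[OF X(4) Y(4), symmetric]
    using tens_e_closed[OF X(3) Y(3)] by blast
qed

end
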